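(* Suppose a black-white array (BWA) stores $n$ values (state variable $\mathtt{total}=n$), where $n$ is $k$-trailed, and a new value is inserted. Then: (a) the result of the $k$ recursive merges is held in the white segment of rank $k$, and it contains all the values that were in segments of rank smaller than $k$, together with the new value; (b) once the insertion is completed, all segments of rank smaller than $k$ are inactive; (c) if $n$ is strongly $k$-trailed, then after the insertion all values in the BWA are held in the segment of rank $k$.
   Context: A black-white array (BWA) of size $N=2^K$ stores values from a totally ordered set. It has a white array $W[1..N-1]$ and a black array $B[1..N/2-1]$. For $i\ge 0$, the segment of rank $i$ of either array is the block of indices $[2^i,2^{i+1}-1]$. An integer state variable $\mathtt{total}$ records the number of stored values and is initially $0$. The segment of rank $i$ is active iff bit $i$ of $\mathtt{total}$ equals $1$ (bits counted from the least significant bit, which is bit $0$). Between operations, all stored values are held in the active white segments, each sorted ascending. Insert$(v)$: if the rank-0 segment is inactive, set $W[1]=v$; otherwise set $B[1]=v$ and perform $\mathrm{merge}(0)$. $\mathrm{merge}(i)$: merge the sorted white and black segments of rank $i$ by a standard two-way merge. If the rank-$(i+1)$ segment is inactive, the sorted result is written into the white segment of rank $i+1$. Otherwise it is written into the black segment of rank $i+1$, and then $\mathrm{merge}(i+1)$ is performed. When an insertion completes, $\mathtt{total}$ has increased by one. A nonnegative integer $n$ is $k$-trailed if its binary form is $[b_{m-1},\dots,b_{k+1},0,1,\dots,1]$, with exactly $k$ trailing ones followed by a $0$ at bit $k$. It is strongly $k$-trailed if moreover $b_i=0$ for all $i>k$, i.e. $n=2^k-1$. *)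

theory Defs
  imports "HOL-Library.Multiset"
begin

text \<open>Black-white array (BWA). Arrays are modelled as functions from indices to values;
  only indices in the segments matter. The segment of rank i is the block [2^i, 2^(i+1)-1].\<close>

record 'a bwa =
  W :: "nat \<Rightarrow> 'a"
  B :: "nat \<Rightarrow> 'a"
  total :: nat

definition seg :: "(nat \<Rightarrow> 'a) \<Rightarrow> nat \<Rightarrow> 'a list" where
  "seg A i = map A [2^i ..< 2^(i+1)]"

definition write_seg :: "(nat \<Rightarrow> 'a) \<Rightarrow> nat \<Rightarrow> 'a list \<Rightarrow> (nat \<Rightarrow> 'a)" where
  "write_seg A i xs = (\<lambda>j. if 2^i \<le> j \<and> j < 2^i + length xs then xs ! (j - 2^i) else A j)"

fun lmerge :: "'a::linorder list \<Rightarrow> 'a list \<Rightarrow> 'a list" where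
  "lmerge [] ys = ys"
| "lmerge xs [] = xs"
| "lmerge (x # xs) (y # ys) =
     (if x \<le> y then x # lmerge xs (y # ys) else y # lmerge (x # xs) ys)"

definition active :: "'a bwa \<Rightarrow> nat \<Rightarrow> bool" where
  "active S i \<longleftrightarrow> bit (total S) i"

lemma bit_nat_rank_less: "bit (t::nat) j \<Longrightarrow> j < t"
proof -
  assume "bit t j"
  then have "odd (t div 2^j)" by (simp add: bit_iff_odd)
  then have "t div 2^j \<noteq> 0" by (metis even_zero)
  then have "2^j \<le> t" by (simp add: div_eq_0_iff not_less)
  moreover have "j < (2::nat)^j" by (rule less_exp)
  ultimately show ?thesis by linarith
qed

text \<open>merge(i), performed during an insertion into a BWA whose counter total equals t
  (total is only incremented once the insertion is completed). Returns the new (W, B).\<close>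
function merge_rec :: "nat \<Rightarrow> nat \<Rightarrow> (nat \<Rightarrow> 'a::linorder) \<Rightarrow> (nat \<Rightarrow> 'a)
                         \<Rightarrow> (nat \<Rightarrow> 'a) \<times> (nat \<Rightarrow> 'a)" where
  "merge_rec t i Wa Ba =
     (let xs = lmerge (seg Wa i) (seg Ba i) in
      if bit t (i+1) then merge_rec t (i+1) Wa (write_seg Ba (i+1) xs)
      else (write_seg Wa (i+1) xs, Ba))"
  by pat_completeness auto
termination
  by (relation "measure (\<lambda>(t, i, _, _). t - i)") (auto dest: bit_nat_rank_less)

definition insert_bwa :: "'a::linorder \<Rightarrow> 'a bwa \<Rightarrow> 'a bwa" where
  "insert_bwa v S =
     (if \<not> bit (total S) 0 then S\<lparr>W := (W S)(1 := v), total := total S + 1\<rparr>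
      else (case merge_rec (total S) 0 (W S) ((B S)(1 := v)) of
              (W', B') \<Rightarrow> S\<lparr>W := W', B := B', total := total S + 1\<rparr>))"

text \<open>Multiset of stored values: contents of the active white segments
  (an active rank i satisfies i < total, see bit_nat_rank_less).\<close>
definition stored :: "'a bwa \<Rightarrow> 'a multiset" where
  "stored S = (\<Sum>i \<in> {i. i < total S \<and> active S i}. mset (seg (W S) i))"

text \<open>Invariant between operations for a BWA of size N = 2^K: white array W[1..N-1] can hold
  total values, and every active white segment is sorted ascending.\<close>
definition bwa_inv :: "nat \<Rightarrow> 'a::linorder bwa \<Rightarrow> bool" where
  "bwa_inv K S \<longleftrightarrow> total S \<le> 2^K - 1 \<and> (\<forall>i. active S i \<longrightarrow> sorted (seg (W S) i))"

definition k_trailed :: "nat \<Rightarrow> nat \<Rightarrow> bool" where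
  "k_trailed k n \<longleftrightarrow> (\<forall>i<k. bit n i) \<and> \<not> bit n k"

definition strongly_k_trailed :: "nat \<Rightarrow> nat \<Rightarrow> bool" where
  "strongly_k_trailed k n \<longleftrightarrow> k_trailed k n \<and> (\<forall>i>k. \<not> bit n i)"

end

theory Submission
  imports Defs
begin

text \<open>Insertion is binary increment with carries. Bits 0, ..., k-1 of a k-trailed n are set and
  bit k is clear, so the carry runs through ranks 0, ..., k-1: each merge(i) with i+1 < k lands in
  the black segment of rank i+1 and recurses, and merge(k-1) lands in the inactive white segment
  of rank k. Merging preserves multisets, so along the carry chain the black segment of rank i
  accumulates the new value and the white segments below i; this gives (a). Since n+1 has bits
  0, ..., k-1 clear and bit k set, (b) follows, and for n = 2^k - 1 the only active rank of n+1
  is k, which gives (c).\<close>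

lemma mset_lmerge: "mset (lmerge xs ys) = mset xs + mset ys"
  by (induction xs ys rule: lmerge.induct) auto

lemma length_lmerge: "length (lmerge xs ys) = length xs + length ys"
  by (induction xs ys rule: lmerge.induct) auto

lemma length_seg: "length (seg A i) = 2^i"
  by (simp add: seg_def)

lemma seg_write_seg_same: "length xs = 2^i \<Longrightarrow> seg (write_seg A i xs) i = xs"
  by (auto simp: seg_def write_seg_def intro!: nth_equalityI)

lemma length_lmerge_segs: "length (lmerge (seg A i) (seg A' i)) = 2^(i+1)"
  by (simp add: length_lmerge length_seg)

declare merge_rec.simps [simp del]

lemma mset_seg_merge_rec_carry:
  "i < k \<Longrightarrow> (\<forall>j. i < j \<and> j < k \<longrightarrow> bit t j) \<Longrightarrow> \<not> bit t k \<Longrightarrow>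
   mset (seg (fst (merge_rec t i Wa Ba)) k) = (\<Sum>j\<in>{i..<k}. mset (seg Wa j)) + mset (seg Ba i)"
proof (induction t i Wa Ba rule: merge_rec.induct)
  case (1 t i Wa Ba)
  let ?xs = "lmerge (seg Wa i) (seg Ba i)"
  have sum_split: "(\<Sum>j\<in>{i..<k}. mset (seg Wa j)) = mset (seg Wa i) + (\<Sum>j\<in>{i+1..<k}. mset (seg Wa j))"
    using \<open>i < k\<close> by (simp add: atLeastLessThanSuc_atLeastAtMost sum.atLeast_Suc_lessThan)
  show ?case
  proof (cases "k = i + 1")
    case True
    then have "merge_rec t i Wa Ba = (write_seg Wa k ?xs, Ba)"
      using \<open>\<not> bit t k\<close> by (simp add: merge_rec.simps Let_def)
    then show ?thesis
      using True by (simp add: seg_write_seg_same length_lmerge_segs mset_lmerge)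
  next
    case False
    then have carry: "bit t (i+1)" and "i + 1 < k"
      using "1.prems" by auto
    then have "mset (seg (fst (merge_rec t i Wa Ba)) k)
        = (\<Sum>j\<in>{i+1..<k}. mset (seg Wa j)) + mset (seg (write_seg Ba (i+1) ?xs) (i+1))"
      using "1.IH"[OF refl carry] "1.prems" carry by (simp add: merge_rec.simps[of t i] Let_def)
    then show ?thesis
      by (simp add: sum_split seg_write_seg_same length_lmerge_segs mset_lmerge)
  qed
qed

lemma total_insert_bwa: "total (insert_bwa v S) = total S + 1"
  by (auto simp: insert_bwa_def split: prod.splits)

lemma mset_seg_insert_bwa:
  assumes "k_trailed k (total S)"
  shows "mset (seg (W (insert_bwa v S)) k) = (\<Sum>i<k. mset (seg (W S) i)) + {#v#}"
proof (cases k)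
  case 0
  then have "\<not> bit (total S) 0" using assms by (simp add: k_trailed_def)
  then show ?thesis using 0 by (simp add: insert_bwa_def seg_def numeral_2_eq_2)
next
  case (Suc k')
  then have "bit (total S) 0" using assms by (simp add: k_trailed_def)
  then have "W (insert_bwa v S) = fst (merge_rec (total S) 0 (W S) ((B S)(1 := v)))"
    by (auto simp: insert_bwa_def split: prod.splits)
  moreover have "seg ((B S)(1 := v)) 0 = [v]" by (simp add: seg_def numeral_2_eq_2)
  ultimately show ?thesis
    using mset_seg_merge_rec_carry[of 0 k "total S" "W S" "(B S)(1 := v)"] assms Suc
    by (simp add: k_trailed_def atLeast0LessThan)
qed

lemma bit_Suc_k_trailed:
  "k_trailed k n \<Longrightarrow> bit (n + 1) i \<longleftrightarrow> i = k \<or> (k < i \<and> bit n i)"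
proof (induction k arbitrary: n i)
  case 0
  then have "even n" by (simp add: k_trailed_def bit_0)
  then have "(n + 1) div 2 = n div 2" by presburger
  then show ?case
    using \<open>even n\<close> by (cases i) (auto simp: bit_0 bit_Suc)
next
  case (Suc k)
  then have "odd n" unfolding k_trailed_def by (metis bit_0 zero_less_Suc)
  then have half: "(n + 1) div 2 = n div 2 + 1" by presburger
  have "k_trailed k (n div 2)"
    using Suc.prems by (auto simp: k_trailed_def bit_Suc[symmetric])
  then show ?case
    using Suc.IH \<open>odd n\<close> by (cases i) (auto simp: bit_0 bit_Suc half)
qed

theorem mainTheorem2:
  fixes S :: "'a::linorder bwa" and v :: 'a and K k n :: nat
  assumes inv: "bwa_inv K S"
    and room: "total S + 1 \<le> 2^K - 1"
    and tot: "total S = n"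
    and trailed: "k_trailed k n"
  defines "S' \<equiv> insert_bwa v S"
  shows "mset (seg (W S') k) = (\<Sum>i<k. mset (seg (W S) i)) + {#v#}
         \<and> (\<forall>i<k. \<not> active S' i)
         \<and> (strongly_k_trailed k n \<longrightarrow> stored S' = mset (seg (W S') k))"
proof -
  have active_S': "active S' i \<longleftrightarrow> i = k \<or> (k < i \<and> bit n i)" for i
    using bit_Suc_k_trailed[OF trailed] tot
    by (simp add: active_def S'_def total_insert_bwa)
  have "stored S' = mset (seg (W S') k)" if "strongly_k_trailed k n"
  proof -
    have "k < total S'"
      using bit_nat_rank_less active_S' by (auto simp: active_def)
    then have "{i. i < total S' \<and> active S' i} = {k}"
      using that active_S' by (auto simp: strongly_k_trailed_def)
    then show ?thesis by (simp add: stored_def)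
  qed
  then show ?thesis
    using mset_seg_insert_bwa[of k S v] trailed tot active_S' by (simp add: S'_def)
qed

end
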